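(* Let $\mathcal L$ be a Zariski dense set of lines through $0$ in $\mathbb{R}^n$, and let $\Phi:(\mathbb{R}^n,0)\to(\mathbb{R}^n,0)$ be a germ of smooth diffeomorphism with $d_0\Phi=\mathrm{id}$ such that for every $L\in\mathcal L$ the image under $\Phi$ of some neighborhood of $0$ in $L$ is contained in a circle. Then the quadratic part $\Phi_2$, extended to $\mathbb{C}^n$, satisfies $$(\Phi_2(x),\Phi_2(x))=0\quad\text{and}\quad(\Phi_2(x),x)=0\qquad\text{for all }x\in C.$$
   Context: A *circle* in $\mathbb{R}^n$ means either a round Euclidean circle or a straight line; $\mathbb{R}^n$ carries the standard Euclidean inner product $(\cdot,\cdot)$. A set $\mathcal D$ of lines through $0$ in $\mathbb{R}^n$ is *Zariski dense* if every homogeneous real polynomial on $\mathbb{R}^n$ vanishing on all lines of $\mathcal D$ is identically zero. For a smooth germ $\Phi$ with $\Phi(0)=0$, $d_0\Phi=\mathrm{id}$, write its Taylor expansion $\Phi(x)=x+\Phi_2(x)+\Phi_3(x)+\cdots$ with $\Phi_k$ homogeneous polynomial maps of degree $k$. The inner product is extended to $\mathbb{C}^n$ complex-bilinearly, polynomial maps are extended to $\mathbb{C}^n$ by the same formulas, and the *asymptotic cone* is $C=\{x\in\mathbb{C}^n:(x,x)=0\}$. *)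

theory Defs
  imports "HOL-Analysis.Analysis"
begin

fun Ck_on :: "nat \<Rightarrow> ('a::real_normed_vector \<Rightarrow> 'b::real_normed_vector) \<Rightarrow> 'a set \<Rightarrow> bool" where
  "Ck_on 0 f U = continuous_on U f"
| "Ck_on (Suc k) f U = (continuous_on U f \<and> (\<forall>x\<in>U. f differentiable (at x)) \<and>
      (\<forall>v. Ck_on k (\<lambda>x. frechet_derivative f (at x) v) U))"

definition smooth_on :: "('a::real_normed_vector \<Rightarrow> 'b::real_normed_vector) \<Rightarrow> 'a set \<Rightarrow> bool" where
  "smooth_on f U \<longleftrightarrow> (\<forall>k. Ck_on k f U)"

(* germ at 0 of a smooth diffeomorphism (R^n,0) -> (R^n,0) with d_0 Phi = id,
   represented by a representative on an open neighbourhood U of 0 *)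
definition smooth_diffeo_germ_id :: "(real^'n \<Rightarrow> real^'n) \<Rightarrow> (real^'n) set \<Rightarrow> bool" where
  "smooth_diffeo_germ_id \<Phi> U \<longleftrightarrow> open U \<and> 0 \<in> U \<and> smooth_on \<Phi> U \<and> inj_on \<Phi> U \<and>
     open (\<Phi> ` U) \<and> smooth_on (inv_into U \<Phi>) (\<Phi> ` U) \<and> \<Phi> 0 = 0 \<and> (\<Phi> has_derivative id) (at 0)"

definition is_circle :: "(real^'n) set \<Rightarrow> bool" where
  "is_circle S \<longleftrightarrow>
     (\<exists>p v. v \<noteq> 0 \<and> S = {p + t *\<^sub>R v | t. True}) \<or>
     (\<exists>c r u w. r > 0 \<and> norm u = 1 \<and> norm w = 1 \<and> u \<bullet> w = 0 \<and>
        S = {c + (r * cos \<theta>) *\<^sub>R u + (r * sin \<theta>) *\<^sub>R w | \<theta>. True})"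

definition line_through_0 :: "(real^'n) set \<Rightarrow> bool" where
  "line_through_0 L \<longleftrightarrow> (\<exists>v. v \<noteq> 0 \<and> L = {t *\<^sub>R v | t. True})"

(* homogeneous real polynomial of degree d on R^n, given by a finite set A of
   exponent vectors of total degree d and coefficients a *)
definition hpoly_eval :: "(('n \<Rightarrow> nat) \<Rightarrow> real) \<Rightarrow> ('n \<Rightarrow> nat) set \<Rightarrow> real^'n \<Rightarrow> real" where
  "hpoly_eval a A x = (\<Sum>\<alpha>\<in>A. a \<alpha> * (\<Prod>i\<in>UNIV. (x $ i) ^ \<alpha> i))"

definition zariski_dense_lines :: "(real^'n::finite) set set \<Rightarrow> bool" where
  "zariski_dense_lines \<L> \<longleftrightarrow> (\<forall>L\<in>\<L>. line_through_0 L) \<and>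
     (\<forall>(d::nat) A a. finite A \<and> (\<forall>\<alpha>\<in>A. (\<Sum>i\<in>UNIV. \<alpha> i) = d) \<and>
        (\<forall>L\<in>\<L>. \<forall>x\<in>L. hpoly_eval a A x = 0) \<longrightarrow> (\<forall>x. hpoly_eval a A x = 0))"

(* Taylor coefficients of the quadratic part: Phi_2(x)_k = sum_{i,j} c k i j x_i x_j,
   c k i j = (1/2) d^2 Phi_k/dx_i dx_j (0) *)
definition quad_coeff :: "(real^'n \<Rightarrow> real^'n) \<Rightarrow> 'n \<Rightarrow> 'n \<Rightarrow> 'n \<Rightarrow> real" where
  "quad_coeff \<Phi> k i j =
     (frechet_derivative (\<lambda>y. frechet_derivative \<Phi> (at y) (axis i 1)) (at 0) (axis j 1)) $ k / 2"

definition quad_part_C :: "(real^'n \<Rightarrow> real^'n) \<Rightarrow> complex^'n \<Rightarrow> complex^'n" where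
  "quad_part_C \<Phi> z = (\<chi> k. \<Sum>i\<in>UNIV. \<Sum>j\<in>UNIV. complex_of_real (quad_coeff \<Phi> k i j) * z $ i * z $ j)"

(* complex-bilinear extension of the Euclidean inner product *)
definition cbil :: "complex^'n \<Rightarrow> complex^'n \<Rightarrow> complex" where
  "cbil x y = (\<Sum>i\<in>UNIV. x $ i * y $ i)"

end

theory Submission
  imports Defs "HOL-Computational_Algebra.Polynomial"
begin

text \<open>Write \<open>d\<^sub>m(x) = D\<^sup>m\<Phi>(0)(x,\<dots>,x)\<close>, so that \<open>d\<^sub>2 = 2 \<Phi>\<^sub>2\<close>. For \<open>x\<close> on a line of \<open>\<L>\<close> the curve
  \<open>t \<mapsto> \<Phi>(t x)\<close> lies on a circle through \<open>0\<close>; differentiating the equations of that circle four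
  times at \<open>t = 0\<close> shows that \<open>X = (x\<cdot>x) d\<^sub>3 - 3 (x\<cdot>d\<^sub>2) d\<^sub>2\<close> and
  \<open>Y = (x\<cdot>x) d\<^sub>4 - (3 d\<^sub>2\<cdot>d\<^sub>2 + 4 x\<cdot>d\<^sub>3) d\<^sub>2\<close> are proportional to \<open>x\<close>. The \<open>2\<times>2\<close> minors of
  \<open>(x, X)\<close> and \<open>(x, Y)\<close> are homogeneous polynomials vanishing on the lines of \<open>\<L>\<close>, hence
  identically, also over \<open>\<complex>\<close>. On the cone \<open>x\<cdot>x = 0\<close> proportionality of \<open>X\<close> forces \<open>x\<cdot>d\<^sub>2 = 0\<close>.
  Restricting to a line through a point of the cone along which \<open>x\<cdot>x\<close> has a simple zero and
  dividing by it, the same two relations then give \<open>x\<cdot>d\<^sub>3 = 0\<close> and finally \<open>d\<^sub>2\<cdot>d\<^sub>2 = 0\<close>.\<close>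

definition dir_deriv :: "'a::real_normed_vector \<Rightarrow> ('a \<Rightarrow> 'b::real_normed_vector) \<Rightarrow> 'a \<Rightarrow> 'b" where
  "dir_deriv v F x = frechet_derivative F (at x) v"

lemma smooth_on_dir_deriv: "smooth_on F U \<Longrightarrow> smooth_on (dir_deriv v F) U"
  unfolding smooth_on_def dir_deriv_def by (metis Ck_on.simps(2))

lemma smooth_on_imp_differentiable: "smooth_on F U \<Longrightarrow> x \<in> U \<Longrightarrow> F differentiable (at x)"
  unfolding smooth_on_def by (metis Ck_on.simps(2))

lemma has_derivative_dir_deriv:
  "F differentiable (at x) \<Longrightarrow> (F has_derivative (\<lambda>v. dir_deriv v F x)) (at x)"
  unfolding dir_deriv_def using frechet_derivative_works by blast

lemma dir_deriv_basis_expansion: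
  fixes F :: "real^'n \<Rightarrow> 'b::real_normed_vector"
  assumes "F differentiable (at x)"
  shows "dir_deriv v F x = (\<Sum>i\<in>UNIV. v $ i *\<^sub>R dir_deriv (axis i 1) F x)"
proof -
  have lin: "linear (\<lambda>v. dir_deriv v F x)"
    using has_derivative_dir_deriv[OF assms] has_derivative_linear by blast
  have "dir_deriv (\<Sum>i\<in>UNIV. v $ i *\<^sub>R axis i 1) F x = (\<Sum>i\<in>UNIV. v $ i *\<^sub>R dir_deriv (axis i 1) F x)"
    by (simp add: linear_sum[OF lin] linear_scale[OF lin])
  moreover have "(\<Sum>i\<in>UNIV. v $ i *\<^sub>R axis i 1) = v"
    using basis_expansion[of v] by (simp add: scalar_mult_eq_scaleR)
  ultimately show ?thesis
    by simp
qed

lemma dir_deriv_linear_combination: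
  assumes "finite I" "open U" "x \<in> U"
    and "\<And>y. y \<in> U \<Longrightarrow> G y = (\<Sum>i\<in>I. c i *\<^sub>R H i y)"
    and "\<And>i. i \<in> I \<Longrightarrow> H i differentiable (at x)"
  shows "dir_deriv v G x = (\<Sum>i\<in>I. c i *\<^sub>R dir_deriv v (H i) x)"
proof -
  have "((\<lambda>y. \<Sum>i\<in>I. c i *\<^sub>R H i y) has_derivative (\<lambda>v. \<Sum>i\<in>I. c i *\<^sub>R dir_deriv v (H i) x)) (at x)"
    by (intro has_derivative_sum has_derivative_scaleR_right has_derivative_dir_deriv assms(5))
  then have "(G has_derivative (\<lambda>v. \<Sum>i\<in>I. c i *\<^sub>R dir_deriv v (H i) x)) (at x)"
    by (rule has_derivative_transform_within_open[OF _ assms(2,3)]) (simp add: assms(4))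
  then have "(\<lambda>v. \<Sum>i\<in>I. c i *\<^sub>R dir_deriv v (H i) x) = frechet_derivative G (at x)"
    by (rule frechet_derivative_at)
  from fun_cong[OF this, of v] show ?thesis
    by (simp add: dir_deriv_def)
qed

lemma has_vector_derivative_along_line:
  assumes "G differentiable (at (t *\<^sub>R v))"
  shows "((\<lambda>t. G (t *\<^sub>R v)) has_vector_derivative dir_deriv v G (t *\<^sub>R v)) (at t)"
proof -
  have lin: "linear (\<lambda>h. dir_deriv h G (t *\<^sub>R v))"
    using has_derivative_dir_deriv[OF assms] has_derivative_linear by blast
  have "((\<lambda>t. t *\<^sub>R v) has_derivative (\<lambda>h. h *\<^sub>R v)) (at t)"
    by (intro derivative_eq_intros) auto
  from has_derivative_compose[OF this has_derivative_dir_deriv[OF assms]]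
  have "((\<lambda>t. G (t *\<^sub>R v)) has_derivative (\<lambda>h. dir_deriv (h *\<^sub>R v) G (t *\<^sub>R v))) (at t)"
    by (simp add: o_def)
  then show ?thesis
    unfolding has_vector_derivative_def linear_scale[OF lin] .
qed

fun partials :: "'n list \<Rightarrow> (real^'n \<Rightarrow> 'b::real_normed_vector) \<Rightarrow> real^'n \<Rightarrow> 'b" where
  "partials [] F = F"
| "partials (i # is) F = dir_deriv (axis i 1) (partials is F)"

lemma smooth_on_partials: "smooth_on F U \<Longrightarrow> smooth_on (partials is F) U"
  by (induction "is") (simp_all add: smooth_on_dir_deriv)

lemma smooth_on_iterated_dir_deriv: "smooth_on F U \<Longrightarrow> smooth_on ((dir_deriv v ^^ m) F) U"
  by (induction m) (simp_all add: smooth_on_dir_deriv)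

lemma finite_lists_length: "finite {xs :: 'a::finite list. length xs = m}"
  using finite_lists_length_eq[of "UNIV :: 'a set" m] by simp

lemma sum_lists_length_Suc:
  "(\<Sum>xs | length xs = Suc m. f xs) = (\<Sum>i\<in>UNIV. \<Sum>xs | length xs = m. f (i # xs :: 'a::finite list))"
proof -
  have "{xs :: 'a list. length xs = Suc m} = (\<lambda>(xs, i). i # xs) ` ({xs. length xs = m} \<times> UNIV)"
    using lists_length_Suc_eq[of "UNIV :: 'a set" m] by simp
  moreover have "inj_on (\<lambda>(xs, i). i # xs) ({xs :: 'a list. length xs = m} \<times> UNIV)"
    by (auto simp: inj_on_def)
  ultimately have "(\<Sum>xs | length xs = Suc m. f xs)
      = (\<Sum>(xs, i) \<in> {xs. length xs = m} \<times> UNIV. f (i # xs))"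
    by (simp only: sum.reindex o_def case_prod_unfold)
  also have "\<dots> = (\<Sum>xs | length xs = m. \<Sum>i\<in>UNIV. f (i # xs))"
    by (rule sum.cartesian_product[symmetric])
  also have "\<dots> = (\<Sum>i\<in>UNIV. \<Sum>xs | length xs = m. f (i # xs))"
    by (rule sum.swap)
  finally show ?thesis .
qed

lemma iterated_dir_deriv_expansion:
  fixes F :: "real^'n \<Rightarrow> 'b::real_normed_vector"
  assumes "smooth_on F U" "open U" "y \<in> U"
  shows "(dir_deriv v ^^ m) F y = (\<Sum>is | length is = m. (\<Prod>i\<leftarrow>is. v $ i) *\<^sub>R partials is F y)"
  using assms(3)
proof (induction m arbitrary: y)
  case 0
  then show ?case by simp
next
  case (Suc m)
  have diff: "partials is F differentiable (at y)" for "is"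
    using smooth_on_imp_differentiable[OF smooth_on_partials[OF assms(1)] Suc.prems] .
  have "(dir_deriv v ^^ Suc m) F y
      = (\<Sum>is | length is = m. (\<Prod>i\<leftarrow>is. v $ i) *\<^sub>R dir_deriv v (partials is F) y)"
    using dir_deriv_linear_combination[OF finite_lists_length assms(2) Suc.prems Suc.IH diff] by simp
  also have "\<dots> = (\<Sum>is | length is = m. \<Sum>i\<in>UNIV. (\<Prod>j\<leftarrow>i # is. v $ j) *\<^sub>R partials (i # is) F y)"
    by (simp add: dir_deriv_basis_expansion[OF diff, of v] scaleR_sum_right mult.commute)
  also have "\<dots> = (\<Sum>is | length is = Suc m. (\<Prod>i\<leftarrow>is. v $ i) *\<^sub>R partials is F y)"
    unfolding sum_lists_length_Suc by (rule sum.swap)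
  finally show ?case .
qed

text \<open>\<open>deriv_form m F z = D\<^sup>mF(0)(z,\<dots>,z)\<close>, i.e. \<open>m!\<close> times the degree \<open>m\<close> Taylor term of \<open>F\<close>,
  written as a polynomial so that it makes sense for vectors over any real algebra, such as \<open>\<complex>\<close>.\<close>

definition deriv_form ::
    "nat \<Rightarrow> (real^'n \<Rightarrow> real^'n) \<Rightarrow> 'a::{real_algebra_1,comm_ring_1}^'n \<Rightarrow> 'a^'n" where
  "deriv_form m F z = (\<chi> k. \<Sum>is | length is = m. (\<Prod>i\<leftarrow>is. z $ i) * of_real (partials is F 0 $ k))"

lemma iterated_dir_deriv_at_0:
  assumes "smooth_on F U" "open U" "0 \<in> U"
  shows "(dir_deriv v ^^ m) F 0 = deriv_form m F v"
  by (simp add: iterated_dir_deriv_expansion[OF assms] deriv_form_def vec_eq_iff sum_component)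

lemma deriv_form_at_0: "m \<noteq> 0 \<Longrightarrow> deriv_form m F (0 :: 'a::{real_algebra_1,comm_ring_1}^'n) = 0"
  by (auto simp: deriv_form_def vec_eq_iff prod_list_zero_iff neq_Nil_conv intro!: sum.neutral)

lemma dir_deriv_at_0_id: "(F has_derivative id) (at 0) \<Longrightarrow> dir_deriv v F 0 = v"
  unfolding dir_deriv_def by (metis frechet_derivative_at id_apply)

lemma quad_part_C_deriv_form: "quad_part_C \<Phi> z = (1 / 2) *s deriv_form 2 \<Phi> z"
proof -
  have "{xs :: 'n list. length xs = 0} = {[]}"
    by auto
  then have "deriv_form 2 \<Phi> z $ k
      = (\<Sum>j\<in>UNIV. \<Sum>i\<in>UNIV. z $ j * z $ i * of_real (partials [j, i] \<Phi> 0 $ k))" for k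
    by (simp add: deriv_form_def numeral_2_eq_2 sum_lists_length_Suc mult.assoc)
  also have "(\<Sum>j\<in>UNIV. \<Sum>i\<in>UNIV. z $ j * z $ i * of_real (partials [j, i] \<Phi> 0 $ k))
      = (\<Sum>i\<in>UNIV. \<Sum>j\<in>UNIV. z $ j * z $ i * of_real (partials [j, i] \<Phi> 0 $ k))" for k
    by (rule sum.swap)
  finally show ?thesis
    by (simp add: vec_eq_iff quad_part_C_def quad_coeff_def dir_deriv_def[abs_def]
        sum_divide_distrib ac_simps)
qed

lemma derivative_chain_vanishes:
  fixes \<phi> :: "nat \<Rightarrow> real \<Rightarrow> 'a::real_normed_vector"
  assumes "open I" and "\<And>k t. t \<in> I \<Longrightarrow> (\<phi> k has_vector_derivative \<phi> (Suc k) t) (at t)"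
    and "\<And>t. t \<in> I \<Longrightarrow> \<phi> 0 t = 0" and "t \<in> I"
  shows "\<phi> k t = 0"
  using assms(4)
proof (induction k arbitrary: t)
  case 0
  then show ?case by (rule assms(3))
next
  case (Suc k)
  have "(\<phi> k has_vector_derivative 0) (at t)"
    by (rule has_vector_derivative_transform_within_open[of "\<lambda>_. 0" _ _ I])
      (use Suc assms(1) in auto)
  with assms(2)[OF Suc.prems] show ?case
    using vector_derivative_unique_at by blast
qed

lemma has_vector_derivative_binomial_sum:
  assumes "bounded_bilinear B" and "\<And>j. (\<gamma> j has_vector_derivative \<gamma> (Suc j) t) (at t)"
  shows "((\<lambda>s. \<Sum>j\<le>k. real (k choose j) *\<^sub>R B (\<gamma> j s) (\<gamma> (k - j) s)) has_vector_derivative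
           (\<Sum>j\<le>Suc k. real (Suc k choose j) *\<^sub>R B (\<gamma> j t) (\<gamma> (Suc k - j) t))) (at t)"
proof -
  let ?p = "\<lambda>i j. B (\<gamma> i t) (\<gamma> j t)"
  have "((\<lambda>s. \<Sum>j\<le>k. real (k choose j) *\<^sub>R B (\<gamma> j s) (\<gamma> (k - j) s)) has_vector_derivative
           (\<Sum>j\<le>k. real (k choose j) *\<^sub>R (?p j (Suc (k - j)) + ?p (Suc j) (k - j)))) (at t)"
    by (intro has_vector_derivative_sum
        bounded_linear.has_vector_derivative[OF bounded_linear_scaleR_right]
        bounded_bilinear.has_vector_derivative[OF assms(1)] assms(2))
  moreover have "(\<Sum>j\<le>k. real (k choose j) *\<^sub>R (?p j (Suc (k - j)) + ?p (Suc j) (k - j)))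
      = (\<Sum>j\<le>Suc k. real (Suc k choose j) *\<^sub>R ?p j (Suc k - j))"
  proof -
    have "(\<Sum>j\<le>Suc k. real (Suc k choose j) *\<^sub>R ?p j (Suc k - j))
        = (\<Sum>j\<le>Suc k. real (k choose j) *\<^sub>R ?p j (Suc k - j))
          + (\<Sum>j\<le>Suc k. (if j = 0 then 0 else real (k choose (j - 1))) *\<^sub>R ?p j (Suc k - j))"
      unfolding sum.distrib[symmetric] scaleR_add_left[symmetric]
      by (rule sum.cong[OF refl], rename_tac j, case_tac j) simp_all
    also have "(\<Sum>j\<le>Suc k. real (k choose j) *\<^sub>R ?p j (Suc k - j))
        = (\<Sum>j\<le>k. real (k choose j) *\<^sub>R ?p j (Suc (k - j)))"
      by (simp add: Suc_diff_le)
    also have "(\<Sum>j\<le>Suc k. (if j = 0 then 0 else real (k choose (j - 1))) *\<^sub>R ?p j (Suc k - j))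
        = (\<Sum>j\<le>k. real (k choose j) *\<^sub>R ?p (Suc j) (k - j))"
      unfolding sum.atMost_Suc_shift by simp
    finally show ?thesis
      by (simp add: scaleR_add_right sum.distrib)
  qed
  ultimately show ?thesis
    by simp
qed

lemma linear_constraint_jets:
  assumes "bounded_linear L" "open I"
    and "\<And>k t. t \<in> I \<Longrightarrow> (\<gamma> k has_vector_derivative \<gamma> (Suc k) t) (at t)"
    and "\<And>t. t \<in> I \<Longrightarrow> L (\<gamma> 0 t) = 0" and "t \<in> I"
  shows "L (\<gamma> k t) = 0"
  using derivative_chain_vanishes[of I "\<lambda>k t. L (\<gamma> k t)"]
    bounded_linear.has_vector_derivative[OF assms(1) assms(3)] assms(2,4,5) by blast

lemma sphere_through_0_jets:
  fixes \<gamma> :: "nat \<Rightarrow> real \<Rightarrow> 'a::real_inner"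
  assumes "open I"
    and "\<And>k t. t \<in> I \<Longrightarrow> (\<gamma> k has_vector_derivative \<gamma> (Suc k) t) (at t)"
    and "\<And>t. t \<in> I \<Longrightarrow> \<gamma> 0 t \<bullet> \<gamma> 0 t = 2 * (c \<bullet> \<gamma> 0 t)" and "t \<in> I"
  shows "(\<Sum>j\<le>k. real (k choose j) * (\<gamma> j t \<bullet> \<gamma> (k - j) t)) = 2 * (c \<bullet> \<gamma> k t)"
proof -
  define \<phi> where
    "\<phi> k s = (\<Sum>j\<le>k. real (k choose j) *\<^sub>R (\<gamma> j s \<bullet> \<gamma> (k - j) s)) - 2 *\<^sub>R (c \<bullet> \<gamma> k s)" for k s
  have "(\<phi> k has_vector_derivative \<phi> (Suc k) s) (at s)" if "s \<in> I" for k s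
    unfolding \<phi>_def
    by (intro has_vector_derivative_diff has_vector_derivative_binomial_sum bounded_bilinear_inner
        bounded_linear.has_vector_derivative[OF bounded_linear_scaleR_right]
        bounded_linear.has_vector_derivative[OF bounded_linear_inner_right] assms(2) that)
  from derivative_chain_vanishes[of I \<phi>, OF assms(1) this _ assms(4)] assms(3)
  show ?thesis
    by (simp add: \<phi>_def)
qed

definition dot :: "'a::comm_ring_1^'n \<Rightarrow> 'a^'n \<Rightarrow> 'a" where
  "dot x y = (\<Sum>i\<in>UNIV. x $ i * y $ i)"

definition proportional :: "'a::comm_ring_1^'n \<Rightarrow> 'a^'n \<Rightarrow> bool" where
  "proportional x y \<longleftrightarrow> (\<forall>k l. x $ k * y $ l = x $ l * y $ k)"

definition circle_form3 :: "'a::comm_ring_1^'n \<Rightarrow> 'a^'n \<Rightarrow> 'a^'n \<Rightarrow> 'a^'n" where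
  "circle_form3 v a b = dot v v *s b - (3 * dot v a) *s a"

definition circle_form4 :: "'a::comm_ring_1^'n \<Rightarrow> 'a^'n \<Rightarrow> 'a^'n \<Rightarrow> 'a^'n \<Rightarrow> 'a^'n" where
  "circle_form4 v a b c = dot v v *s c - (3 * dot a a + 4 * dot v b) *s a"

lemma dot_real: "dot x y = x \<bullet> (y :: real^'n)"
  unfolding dot_def inner_vec_def by simp

lemma dot_commute: "dot x y = dot y x"
  unfolding dot_def by (simp add: mult.commute)

lemma dot_minus_left: "dot (- x) y = - dot x y"
  unfolding dot_def by (simp add: sum_negf)

lemma dot_scale_right: "dot x (c *s y) = c * dot x y"
  unfolding dot_def by (simp add: sum_distrib_left ac_simps)

lemma dot_diff_left: "dot (x - y) z = dot x z - dot y z"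
  unfolding dot_def by (simp add: left_diff_distrib sum_subtractf)

lemma dot_scale_left: "dot (c *s x) y = c * dot x y"
  unfolding dot_def by (simp add: sum_distrib_left mult.assoc)

lemma proportional_dot:
  assumes "proportional z y"
  shows "dot z z * y $ m = dot y z * z $ m"
proof -
  have "dot z z * y $ m = (\<Sum>i\<in>UNIV. z $ i * (z $ i * y $ m))"
    by (simp add: dot_def sum_distrib_right mult.assoc)
  also have "\<dots> = (\<Sum>i\<in>UNIV. z $ i * (z $ m * y $ i))"
    using assms by (simp add: proportional_def)
  also have "\<dots> = dot y z * z $ m"
    unfolding dot_def sum_distrib_right by (simp add: ac_simps)
  finally show ?thesis .
qed

lemma circle_form3_real: "circle_form3 v a b = (v \<bullet> v) *\<^sub>R b - (3 * (v \<bullet> a)) *\<^sub>R (a :: real^'n)"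
  unfolding circle_form3_def dot_real scalar_mult_eq_scaleR ..

lemma circle_form4_real:
  "circle_form4 v a b c = (v \<bullet> v) *\<^sub>R c - (3 * (a \<bullet> a) + 4 * (v \<bullet> b)) *\<^sub>R (a :: real^'n)"
  unfolding circle_form4_def dot_real scalar_mult_eq_scaleR ..

lemma proportional_in_span_1:
  assumes "x \<in> span {e}" "y \<in> span {e :: real^'n}"
  shows "proportional x y"
proof -
  obtain a b where "x = a *\<^sub>R e" "y = b *\<^sub>R e"
    using assms by (auto simp: span_singleton)
  then show ?thesis
    unfolding proportional_def by simp
qed

lemma in_span_2_coordinates:
  fixes u w x :: "'a::real_inner"
  assumes "u \<bullet> u = 1" "w \<bullet> w = 1" "u \<bullet> w = 0" "x \<in> span {u, w}"
  shows "x = (x \<bullet> u) *\<^sub>R u + (x \<bullet> w) *\<^sub>R w"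
proof -
  obtain a b where "x - a *\<^sub>R u = b *\<^sub>R w"
    using assms(4) by (auto simp: span_breakdown_eq span_singleton)
  then have "x = a *\<^sub>R u + b *\<^sub>R w"
    by (simp add: algebra_simps)
  then show ?thesis
    using assms(1-3) by (simp add: inner_add_left inner_add_right inner_commute)
qed

lemma orthogonal_in_plane:
  fixes u w c x :: "'a::real_inner"
  assumes "u \<bullet> u = 1" "w \<bullet> w = 1" "u \<bullet> w = 0"
    and "c \<in> span {u, w}" "c \<noteq> 0" "x \<in> span {u, w}" "c \<bullet> x = 0"
  shows "x \<in> span {(c \<bullet> w) *\<^sub>R u - (c \<bullet> u) *\<^sub>R w}"
proof -
  define c1 c2 x1 x2 where "c1 = c \<bullet> u" "c2 = c \<bullet> w" "x1 = x \<bullet> u" "x2 = x \<bullet> w"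
  have c: "c = c1 *\<^sub>R u + c2 *\<^sub>R w" and x: "x = x1 *\<^sub>R u + x2 *\<^sub>R w"
    unfolding c1_c2_x1_x2_def using in_span_2_coordinates assms(1-4,6) by blast+
  have ip: "(a1 *\<^sub>R u + a2 *\<^sub>R w) \<bullet> (b1 *\<^sub>R u + b2 *\<^sub>R w) = a1 * b1 + a2 * b2" for a1 a2 b1 b2
    using assms(1-3) by (simp add: inner_add_left inner_add_right inner_commute)
  have orth: "c1 * x1 + c2 * x2 = 0"
    using assms(7) ip[of c1 c2 x1 x2] c x by metis
  have "c1 * c1 + c2 * c2 \<noteq> 0"
    using assms(5) ip[of c1 c2 c1 c2] c by (metis inner_eq_zero_iff)
  define s where "s = (c2 * x1 - c1 * x2) / (c1 * c1 + c2 * c2)"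
  have "x1 = s * c2" "x2 = - (s * c1)"
    using \<open>c1 * c1 + c2 * c2 \<noteq> 0\<close> orth unfolding s_def by (simp_all add: field_simps, algebra+)
  then have "x = s *\<^sub>R (c2 *\<^sub>R u - c1 *\<^sub>R w)"
    using x by (simp add: algebra_simps)
  then show ?thesis
    unfolding c1_c2_x1_x2_def span_singleton by (intro image_eqI[where x = s]) simp_all
qed

lemma jets_on_line_proportional:
  fixes \<gamma> :: "nat \<Rightarrow> real \<Rightarrow> real^'n"
  assumes "open I" "0 \<in> I"
    and jets: "\<And>k t. t \<in> I \<Longrightarrow> (\<gamma> k has_vector_derivative \<gamma> (Suc k) t) (at t)"
    and "\<gamma> 0 0 = 0" "\<And>t. t \<in> I \<Longrightarrow> \<gamma> 0 t \<in> S"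
    and "w \<noteq> 0" "S = {p + s *\<^sub>R w | s. True}"
  shows "proportional (\<gamma> 1 0) (circle_form3 (\<gamma> 1 0) (\<gamma> 2 0) (\<gamma> 3 0))
    \<and> proportional (\<gamma> 1 0) (circle_form4 (\<gamma> 1 0) (\<gamma> 2 0) (\<gamma> 3 0) (\<gamma> 4 0))"
proof -
  define L where "L x = (w \<bullet> w) *\<^sub>R x - (x \<bullet> w) *\<^sub>R w" for x :: "real^'n"
  have "bounded_linear L"
    unfolding L_def by (intro bounded_linear_intros)
  obtain s0 where s0: "0 = p + s0 *\<^sub>R w"
    using assms(2,4,5,7) by fastforce
  have "L (\<gamma> 0 t) = 0" if t: "t \<in> I" for t
  proof -
    obtain s where "\<gamma> 0 t = p + s *\<^sub>R w"
      using assms(5,7) t by blast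
    then have "\<gamma> 0 t = (s - s0) *\<^sub>R w"
      using s0 by (simp add: algebra_simps eq_neg_iff_add_eq_0 add.commute)
    then show ?thesis
      by (simp add: L_def)
  qed
  then have "L (\<gamma> k 0) = 0" for k
    using linear_constraint_jets[of L I \<gamma>, OF \<open>bounded_linear L\<close> assms(1) jets] assms(2) by blast
  then have "(w \<bullet> w) *\<^sub>R \<gamma> k 0 = (\<gamma> k 0 \<bullet> w) *\<^sub>R w" for k
    by (simp add: L_def)
  from arg_cong[OF this, of "scaleR (inverse (w \<bullet> w))"]
  have "\<gamma> k 0 = (inverse (w \<bullet> w) * (\<gamma> k 0 \<bullet> w)) *\<^sub>R w" for k
    using assms(6) by simp
  then have "\<gamma> k 0 \<in> span {w}" for k
    unfolding span_singleton by (metis rangeI)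
  then show ?thesis
    unfolding circle_form3_real circle_form4_real
    by (intro conjI proportional_in_span_1 span_diff span_scale)
qed

lemma round_circle_through_0:
  fixes c u w :: "'a::real_inner"
  assumes "u \<bullet> u = 1" "w \<bullet> w = 1" "u \<bullet> w = 0" "r > 0"
    and S: "S = {c + (r * cos \<theta>) *\<^sub>R u + (r * sin \<theta>) *\<^sub>R w | \<theta>. True}" and "0 \<in> S"
  shows "c \<in> span {u, w}" "c \<noteq> 0" and "x \<in> S \<Longrightarrow> x \<bullet> x = 2 * (c \<bullet> x) \<and> x \<in> span {u, w}"
proof -
  have on_circle: "x - c \<in> span {u, w} \<and> (x - c) \<bullet> (x - c) = r\<^sup>2" if xS: "x \<in> S" for x
  proof -
    obtain \<theta> where x: "x = c + (r * cos \<theta>) *\<^sub>R u + (r * sin \<theta>) *\<^sub>R w"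
      using S xS by blast
    then have "x - c \<in> span {u, w}"
      by (simp, intro span_add span_scale span_base) simp_all
    moreover have "(x - c) \<bullet> (x - c) = (r * cos \<theta>)\<^sup>2 + (r * sin \<theta>)\<^sup>2"
      using x assms(1-3) by (simp add: inner_add_left inner_add_right inner_commute power2_eq_square)
    moreover have "(r * cos \<theta>)\<^sup>2 + (r * sin \<theta>)\<^sup>2 = r\<^sup>2"
      unfolding power_mult_distrib distrib_left[symmetric] sin_cos_squared_add2 by simp
    ultimately show ?thesis
      by simp
  qed
  from on_circle[OF \<open>0 \<in> S\<close>] have c: "c \<in> span {u, w}" and cc: "c \<bullet> c = r\<^sup>2"
    using span_neg by fastforce+
  then show "c \<in> span {u, w}" "c \<noteq> 0"
    using \<open>r > 0\<close> by auto
  show "x \<bullet> x = 2 * (c \<bullet> x) \<and> x \<in> span {u, w}" if "x \<in> S"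
    using on_circle[OF that] cc c span_add[of "x - c" _ c]
    by (auto simp: inner_diff_left inner_diff_right inner_commute)
qed

text \<open>A circle through \<open>0\<close> with centre \<open>c\<close> is cut out by \<open>x \<bullet> x = 2 (c \<bullet> x)\<close> inside its plane.
  Differentiating this along a curve with jets \<open>v, a, b, d\<close> at \<open>0\<close> gives the hypotheses on \<open>c\<close> below;
  \<open>circle_form3\<close> and \<open>circle_form4\<close> are the combinations of the jets that they force to be
  orthogonal to \<open>c\<close>, hence parallel to \<open>v\<close>.\<close>

lemma circle_forms_proportional_in_plane:
  fixes u w c v a b d :: "real^'n"
  assumes "u \<bullet> u = 1" "w \<bullet> w = 1" "u \<bullet> w = 0" "c \<in> span {u, w}" "c \<noteq> 0"
    and plane: "v \<in> span {u, w}" "a \<in> span {u, w}" "b \<in> span {u, w}" "d \<in> span {u, w}"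
    and "c \<bullet> v = 0" "c \<bullet> a = v \<bullet> v" "c \<bullet> b = 3 * (v \<bullet> a)" "c \<bullet> d = 4 * (v \<bullet> b) + 3 * (a \<bullet> a)"
  shows "proportional v (circle_form3 v a b) \<and> proportional v (circle_form4 v a b d)"
proof -
  note orth = orthogonal_in_plane[OF assms(1-5)]
  have "c \<bullet> circle_form3 v a b = 0" "c \<bullet> circle_form4 v a b d = 0"
    unfolding circle_form3_real circle_form4_real using assms(10-13)
    by (simp_all add: inner_diff_right algebra_simps)
  moreover have "circle_form3 v a b \<in> span {u, w}" "circle_form4 v a b d \<in> span {u, w}"
    unfolding circle_form3_real circle_form4_real by (intro span_diff span_scale plane)+
  ultimately show ?thesis
    using orth[OF plane(1) assms(10)] orth by (intro conjI proportional_in_span_1) blast+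
qed

lemma jets_on_round_circle_proportional:
  fixes \<gamma> :: "nat \<Rightarrow> real \<Rightarrow> real^'n"
  assumes "open I" "0 \<in> I"
    and jets: "\<And>k t. t \<in> I \<Longrightarrow> (\<gamma> k has_vector_derivative \<gamma> (Suc k) t) (at t)"
    and "\<gamma> 0 0 = 0" "\<And>t. t \<in> I \<Longrightarrow> \<gamma> 0 t \<in> S"
    and "r > 0" "norm u = 1" "norm w = 1" "u \<bullet> w = 0"
    and S: "S = {c + (r * cos \<theta>) *\<^sub>R u + (r * sin \<theta>) *\<^sub>R w | \<theta>. True}"
  shows "proportional (\<gamma> 1 0) (circle_form3 (\<gamma> 1 0) (\<gamma> 2 0) (\<gamma> 3 0))
    \<and> proportional (\<gamma> 1 0) (circle_form4 (\<gamma> 1 0) (\<gamma> 2 0) (\<gamma> 3 0) (\<gamma> 4 0))"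
proof -
  have uu: "u \<bullet> u = 1" and ww: "w \<bullet> w = 1"
    using assms(7,8) by (simp_all add: dot_square_norm)
  have "0 \<in> S"
    using assms(2,4,5) by metis
  note circle = round_circle_through_0[OF uu ww assms(9,6) S this]
  define L where "L x = x - ((x \<bullet> u) *\<^sub>R u + (x \<bullet> w) *\<^sub>R w)" for x :: "real^'n"
  have "bounded_linear L"
    unfolding L_def by (intro bounded_linear_intros)
  have "L (\<gamma> 0 t) = 0" if "t \<in> I" for t
    using in_span_2_coordinates[OF uu ww assms(9)] circle(3) assms(5)[OF that]
    unfolding L_def right_minus_eq by blast
  then have "L (\<gamma> k 0) = 0" for k
    using linear_constraint_jets[of L I \<gamma>, OF \<open>bounded_linear L\<close> assms(1) jets] assms(2) by blast
  then have coords: "\<gamma> k 0 = (\<gamma> k 0 \<bullet> u) *\<^sub>R u + (\<gamma> k 0 \<bullet> w) *\<^sub>R w" for k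
    unfolding L_def right_minus_eq .
  have jet_plane: "\<gamma> k 0 \<in> span {u, w}" for k
    by (subst coords, intro span_add span_scale span_base) simp_all
  have "\<gamma> 0 t \<bullet> \<gamma> 0 t = 2 * (c \<bullet> \<gamma> 0 t)" if "t \<in> I" for t
    using circle(3) assms(5)[OF that] by blast
  then have "(\<Sum>j\<le>k. real (k choose j) * (\<gamma> j 0 \<bullet> \<gamma> (k - j) 0)) = 2 * (c \<bullet> \<gamma> k 0)" for k
    using sphere_through_0_jets[of I \<gamma> c, OF assms(1) jets _ assms(2)] by blast
  from this[of 1] this[of 2] this[of 3] this[of 4] assms(4)
  have "c \<bullet> \<gamma> 1 0 = 0" "c \<bullet> \<gamma> 2 0 = \<gamma> 1 0 \<bullet> \<gamma> 1 0" "c \<bullet> \<gamma> 3 0 = 3 * (\<gamma> 1 0 \<bullet> \<gamma> 2 0)"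
    "c \<bullet> \<gamma> 4 0 = 4 * (\<gamma> 1 0 \<bullet> \<gamma> 3 0) + 3 * (\<gamma> 2 0 \<bullet> \<gamma> 2 0)"
    by (simp_all add: numeral_eq_Suc atMost_Suc inner_commute)
  then show ?thesis
    using circle_forms_proportional_in_plane[OF uu ww assms(9) circle(1,2)
        jet_plane jet_plane jet_plane jet_plane]
    by blast
qed

lemma jets_on_circle_proportional:
  fixes \<gamma> :: "nat \<Rightarrow> real \<Rightarrow> real^'n"
  assumes "open I" "0 \<in> I"
    and "\<And>k t. t \<in> I \<Longrightarrow> (\<gamma> k has_vector_derivative \<gamma> (Suc k) t) (at t)"
    and "\<gamma> 0 0 = 0" "\<And>t. t \<in> I \<Longrightarrow> \<gamma> 0 t \<in> S" "is_circle S"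
  shows "proportional (\<gamma> 1 0) (circle_form3 (\<gamma> 1 0) (\<gamma> 2 0) (\<gamma> 3 0))
    \<and> proportional (\<gamma> 1 0) (circle_form4 (\<gamma> 1 0) (\<gamma> 2 0) (\<gamma> 3 0) (\<gamma> 4 0))"
  using assms(6) unfolding is_circle_def
  by (elim disjE exE conjE)
    (rule jets_on_line_proportional[OF assms(1-5)] jets_on_round_circle_proportional[OF assms(1-5)];
      assumption)+

definition deriv_circle_form3 ::
    "(real^'n \<Rightarrow> real^'n) \<Rightarrow> 'a::{real_algebra_1,comm_ring_1}^'n \<Rightarrow> 'a^'n" where
  "deriv_circle_form3 \<Phi> z = circle_form3 z (deriv_form 2 \<Phi> z) (deriv_form 3 \<Phi> z)"

definition deriv_circle_form4 ::
    "(real^'n \<Rightarrow> real^'n) \<Rightarrow> 'a::{real_algebra_1,comm_ring_1}^'n \<Rightarrow> 'a^'n" where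
  "deriv_circle_form4 \<Phi> z = circle_form4 z (deriv_form 2 \<Phi> z) (deriv_form 3 \<Phi> z) (deriv_form 4 \<Phi> z)"

lemma deriv_circle_forms_proportional_on_line:
  fixes \<Phi> :: "real^'n \<Rightarrow> real^'n"
  assumes germ: "smooth_diffeo_germ_id \<Phi> U" and "line_through_0 L" "x \<in> L"
    and "\<epsilon> > 0" "L \<inter> ball 0 \<epsilon> \<subseteq> U" "is_circle S" "\<Phi> ` (L \<inter> ball 0 \<epsilon>) \<subseteq> S"
  shows "proportional x (deriv_circle_form3 \<Phi> x) \<and> proportional x (deriv_circle_form4 \<Phi> x)"
proof (cases "x = 0")
  case True
  then show ?thesis
    by (simp add: proportional_def)
next
  case False
  have U: "open U" "0 \<in> U" and sm: "smooth_on \<Phi> U" and "\<Phi> 0 = 0" "(\<Phi> has_derivative id) (at 0)"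
    using germ unfolding smooth_diffeo_germ_id_def by simp_all
  define I where "I = ball (0::real) (\<epsilon> / norm x)"
  have line: "t *\<^sub>R x \<in> L \<inter> ball 0 \<epsilon>" if "t \<in> I" for t
  proof
    show "t *\<^sub>R x \<in> L"
      using assms(2,3) unfolding line_through_0_def by (auto simp: scaleR_scaleR)
    show "t *\<^sub>R x \<in> ball 0 \<epsilon>"
      using that False by (simp add: I_def pos_less_divide_eq)
  qed
  define \<gamma> where "\<gamma> k = (\<lambda>t. (dir_deriv x ^^ k) \<Phi> (t *\<^sub>R x))" for k
  have "open I" "0 \<in> I"
    using \<open>\<epsilon> > 0\<close> False by (simp_all add: I_def)
  have jets: "(\<gamma> k has_vector_derivative \<gamma> (Suc k) t) (at t)" if "t \<in> I" for k t
  proof -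
    have "t *\<^sub>R x \<in> U"
      using line[OF that] assms(5) by blast
    from has_vector_derivative_along_line[OF
        smooth_on_imp_differentiable[OF smooth_on_iterated_dir_deriv[OF sm, of k x] this]]
    show ?thesis
      by (simp add: \<gamma>_def)
  qed
  have "\<gamma> 0 t \<in> S" if "t \<in> I" for t
    using line[OF that] assms(7) by (auto simp: \<gamma>_def)
  from jets_on_circle_proportional[OF \<open>open I\<close> \<open>0 \<in> I\<close> jets _ this assms(6)]
  show ?thesis
    unfolding deriv_circle_form3_def deriv_circle_form4_def
    using iterated_dir_deriv_at_0[OF sm U] dir_deriv_at_0_id[OF \<open>(\<Phi> has_derivative id) (at 0)\<close>]
      \<open>\<Phi> 0 = 0\<close> by (simp add: \<gamma>_def)
qed

definition monomial :: "('n \<Rightarrow> nat) \<Rightarrow> 'a::comm_ring_1^'n \<Rightarrow> 'a" where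
  "monomial \<alpha> z = (\<Prod>i\<in>UNIV. z $ i ^ \<alpha> i)"

definition hpoly_fun :: "nat \<Rightarrow> ('a::comm_ring_1^'n \<Rightarrow> 'a) \<Rightarrow> bool" where
  "hpoly_fun d F \<longleftrightarrow> (\<exists>a A. finite A \<and> (\<forall>\<alpha>\<in>A. (\<Sum>i\<in>UNIV. \<alpha> i) = d)
     \<and> (\<forall>z. F z = (\<Sum>\<alpha>\<in>A. a \<alpha> * monomial \<alpha> z)))"

definition hpoly_map :: "nat \<Rightarrow> ('a::comm_ring_1^'n \<Rightarrow> 'a^'n) \<Rightarrow> bool" where
  "hpoly_map d F \<longleftrightarrow> (\<forall>k. hpoly_fun d (\<lambda>z. F z $ k))"

lemma monomial_add: "monomial (\<lambda>i. \<alpha> i + \<beta> i) z = monomial \<alpha> z * monomial \<beta> z"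
  unfolding monomial_def by (simp add: power_add prod.distrib)

lemma hpoly_fun_zero: "hpoly_fun d (\<lambda>z. 0)"
  unfolding hpoly_fun_def by (rule exI[of _ "\<lambda>_. 0"], rule exI[of _ "{}"]) simp

lemma hpoly_fun_const: "hpoly_fun 0 (\<lambda>z. c)"
  unfolding hpoly_fun_def monomial_def by (rule exI[of _ "\<lambda>_. c"], rule exI[of _ "{\<lambda>_. 0}"]) simp

lemma hpoly_fun_coordinate: "hpoly_fun 1 (\<lambda>z :: 'a::comm_ring_1^'n. z $ i)"
proof -
  have "monomial (\<lambda>j. if j = i then 1 else 0) z = z $ i" for z :: "'a^'n"
    unfolding monomial_def by (simp add: if_distrib[of "power _"] prod.If_cases)
  then show ?thesis
    unfolding hpoly_fun_def by (intro exI[of _ "\<lambda>_. 1"] exI[of _ "{\<lambda>j. if j = i then 1 else 0}"]) simp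
qed

lemma hpoly_fun_add:
  assumes "hpoly_fun d F" "hpoly_fun d G"
  shows "hpoly_fun d (\<lambda>z. F z + G z)"
proof -
  obtain a A where A: "finite A" "\<forall>\<alpha>\<in>A. (\<Sum>i\<in>UNIV. \<alpha> i) = d" "\<And>z. F z = (\<Sum>\<alpha>\<in>A. a \<alpha> * monomial \<alpha> z)"
    using assms(1) unfolding hpoly_fun_def by blast
  obtain b B where B: "finite B" "\<forall>\<alpha>\<in>B. (\<Sum>i\<in>UNIV. \<alpha> i) = d" "\<And>z. G z = (\<Sum>\<alpha>\<in>B. b \<alpha> * monomial \<alpha> z)"
    using assms(2) unfolding hpoly_fun_def by blast
  define c where "c \<alpha> = (if \<alpha> \<in> A then a \<alpha> else 0) + (if \<alpha> \<in> B then b \<alpha> else 0)" for \<alpha>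
  have restrict: "(\<Sum>\<alpha>\<in>A \<union> B. if \<alpha> \<in> X then f \<alpha> else 0) = sum f X" if "X \<subseteq> A \<union> B" for X f
    using sum.inter_restrict[of "A \<union> B" f X] A(1) B(1) that by (simp add: Int_absorb1)
  have "F z + G z = (\<Sum>\<alpha>\<in>A \<union> B. c \<alpha> * monomial \<alpha> z)" for z
    unfolding A(3) B(3) c_def distrib_right sum.distrib if_distrib[of "\<lambda>x. x * _"] mult_zero_left
    by (simp add: restrict)
  then show ?thesis
    unfolding hpoly_fun_def using A(1,2) B(1,2) by (intro exI[of _ c] exI[of _ "A \<union> B"]) auto
qed

lemma hpoly_fun_mult:
  fixes F G :: "'a::comm_ring_1^'n \<Rightarrow> 'a"
  assumes "hpoly_fun d F" "hpoly_fun e G"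
  shows "hpoly_fun (d + e) (\<lambda>z. F z * G z)"
proof -
  obtain a A where A: "finite A" "\<forall>\<alpha>\<in>A. (\<Sum>i\<in>UNIV. \<alpha> i) = d" "\<And>z. F z = (\<Sum>\<alpha>\<in>A. a \<alpha> * monomial \<alpha> z)"
    using assms(1) unfolding hpoly_fun_def by blast
  obtain b B where B: "finite B" "\<forall>\<alpha>\<in>B. (\<Sum>i\<in>UNIV. \<alpha> i) = e" "\<And>z. G z = (\<Sum>\<alpha>\<in>B. b \<alpha> * monomial \<alpha> z)"
    using assms(2) unfolding hpoly_fun_def by blast
  define plus where "plus p = (\<lambda>i. fst p i + snd p i)" for p :: "('n \<Rightarrow> nat) \<times> ('n \<Rightarrow> nat)"
  define c where "c \<gamma> = (\<Sum>p | p \<in> A \<times> B \<and> plus p = \<gamma>. a (fst p) * b (snd p))" for \<gamma>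
  have "F z * G z = (\<Sum>\<gamma>\<in>plus ` (A \<times> B). c \<gamma> * monomial \<gamma> z)" for z
  proof -
    have "F z * G z = (\<Sum>p\<in>A \<times> B. a (fst p) * b (snd p) * monomial (plus p) z)"
      unfolding A(3) B(3) sum_product sum.cartesian_product plus_def monomial_add
      by (rule sum.cong) (auto simp: ac_simps)
    also have "\<dots> = (\<Sum>\<gamma>\<in>plus ` (A \<times> B).
        \<Sum>p | p \<in> A \<times> B \<and> plus p = \<gamma>. a (fst p) * b (snd p) * monomial (plus p) z)"
      using A(1) B(1) by (intro sum.group[symmetric]) auto
    also have "\<dots> = (\<Sum>\<gamma>\<in>plus ` (A \<times> B). c \<gamma> * monomial \<gamma> z)"
      unfolding c_def sum_distrib_right by (rule sum.cong) auto
    finally show ?thesis .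
  qed
  moreover have "\<forall>\<gamma>\<in>plus ` (A \<times> B). (\<Sum>i\<in>UNIV. \<gamma> i) = d + e"
    using A(2) B(2) by (auto simp: plus_def sum.distrib)
  ultimately show ?thesis
    unfolding hpoly_fun_def using A(1) B(1) by (intro exI[of _ c] exI[of _ "plus ` (A \<times> B)"]) simp
qed

lemma hpoly_fun_minus: "hpoly_fun d F \<Longrightarrow> hpoly_fun d (\<lambda>z. - F z)"
  using hpoly_fun_mult[OF hpoly_fun_const[of "-1"]] by simp

lemma hpoly_fun_diff: "hpoly_fun d F \<Longrightarrow> hpoly_fun d G \<Longrightarrow> hpoly_fun d (\<lambda>z. F z - G z)"
  using hpoly_fun_add[OF _ hpoly_fun_minus] by simp

lemma hpoly_fun_scale: "hpoly_fun d F \<Longrightarrow> hpoly_fun d (\<lambda>z. c * F z)"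
  using hpoly_fun_mult[OF hpoly_fun_const] by simp

lemma hpoly_fun_sum:
  "finite I \<Longrightarrow> (\<And>i. i \<in> I \<Longrightarrow> hpoly_fun d (F i)) \<Longrightarrow> hpoly_fun d (\<lambda>z. \<Sum>i\<in>I. F i z)"
  by (induction I rule: finite_induct) (simp_all add: hpoly_fun_zero hpoly_fun_add)

lemma hpoly_fun_prod_list_coordinates: "hpoly_fun (length is) (\<lambda>z. \<Prod>i\<leftarrow>is. z $ i)"
  by (induction "is")
    (simp_all add: hpoly_fun_const hpoly_fun_mult[OF hpoly_fun_coordinate, simplified])

lemma hpoly_map_id: "hpoly_map 1 (\<lambda>z. z)"
  unfolding hpoly_map_def using hpoly_fun_coordinate by blast

lemma hpoly_map_deriv_form: "hpoly_map m (deriv_form m F)"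
  unfolding hpoly_map_def deriv_form_def
  using hpoly_fun_mult[OF hpoly_fun_prod_list_coordinates hpoly_fun_const]
  by (auto intro!: hpoly_fun_sum simp: finite_lists_length)

lemma hpoly_fun_dot: "hpoly_map d F \<Longrightarrow> hpoly_map e G \<Longrightarrow> hpoly_fun (d + e) (\<lambda>z. dot (F z) (G z))"
  unfolding hpoly_map_def dot_def by (intro hpoly_fun_sum hpoly_fun_mult) auto

lemma hpoly_map_scale:
  "hpoly_fun d p \<Longrightarrow> hpoly_map e F \<Longrightarrow> hpoly_map (d + e) (\<lambda>z. p z *s F z)"
  unfolding hpoly_map_def by (simp add: hpoly_fun_mult)

lemma hpoly_map_diff: "hpoly_map d F \<Longrightarrow> hpoly_map d G \<Longrightarrow> hpoly_map d (\<lambda>z. F z - G z)"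
  unfolding hpoly_map_def by (simp add: hpoly_fun_diff)

lemma hpoly_fun_proportional_minor:
  "hpoly_map d F \<Longrightarrow> hpoly_map e G \<Longrightarrow> hpoly_fun (d + e) (\<lambda>z. F z $ k * G z $ l - F z $ l * G z $ k)"
  unfolding hpoly_map_def by (intro hpoly_fun_diff hpoly_fun_mult) auto

lemma zariski_dense_lines_hpoly_fun_vanishes:
  fixes F :: "real^'n \<Rightarrow> real"
  assumes "zariski_dense_lines \<L>" "hpoly_fun d F" "\<And>L x. L \<in> \<L> \<Longrightarrow> x \<in> L \<Longrightarrow> F x = 0"
  shows "F x = 0"
proof -
  obtain a A where "finite A" "\<forall>\<alpha>\<in>A. (\<Sum>i\<in>UNIV. \<alpha> i) = d" and F: "\<And>x. F x = hpoly_eval a A x"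
    using assms(2) unfolding hpoly_fun_def monomial_def hpoly_eval_def by blast
  with assms(1,3) show ?thesis
    unfolding zariski_dense_lines_def by metis
qed

lemma zariski_dense_lines_proportional:
  fixes X :: "real^'n \<Rightarrow> real^'n"
  assumes "zariski_dense_lines \<L>" "hpoly_map d X" "\<And>L x. L \<in> \<L> \<Longrightarrow> x \<in> L \<Longrightarrow> proportional x (X x)"
  shows "proportional x (X x)"
proof -
  have "x $ k * X x $ l - x $ l * X x $ k = 0" for k l
    by (rule zariski_dense_lines_hpoly_fun_vanishes[OF assms(1)
          hpoly_fun_proportional_minor[OF hpoly_map_id assms(2)]])
      (use assms(3) in \<open>simp add: proportional_def\<close>)
  then show ?thesis
    unfolding proportional_def by simp
qed

lemma hpoly_map_deriv_circle_form3:
  "hpoly_map 5 (deriv_circle_form3 \<Phi> :: 'a::{real_algebra_1,comm_ring_1}^'n \<Rightarrow> 'a^'n)"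
proof -
  have "hpoly_map 5 (\<lambda>z :: 'a^'n. dot z z *s deriv_form 3 \<Phi> z)"
    using hpoly_map_scale[OF hpoly_fun_dot[OF hpoly_map_id hpoly_map_id] hpoly_map_deriv_form[of 3 \<Phi>]]
    by simp
  moreover have "hpoly_map 5 (\<lambda>z :: 'a^'n. (3 * dot z (deriv_form 2 \<Phi> z)) *s deriv_form 2 \<Phi> z)"
    using hpoly_map_scale[OF
        hpoly_fun_scale[OF hpoly_fun_dot[OF hpoly_map_id hpoly_map_deriv_form[of 2 \<Phi>]]]
        hpoly_map_deriv_form[of 2 \<Phi>]] by (simp add: numeral_eq_Suc)
  ultimately show ?thesis
    unfolding deriv_circle_form3_def circle_form3_def by (rule hpoly_map_diff)
qed

lemma hpoly_map_deriv_circle_form4: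
  "hpoly_map 6 (deriv_circle_form4 \<Phi> :: 'a::{real_algebra_1,comm_ring_1}^'n \<Rightarrow> 'a^'n)"
proof -
  have "hpoly_map 6 (\<lambda>z :: 'a^'n. dot z z *s deriv_form 4 \<Phi> z)"
    using hpoly_map_scale[OF hpoly_fun_dot[OF hpoly_map_id hpoly_map_id] hpoly_map_deriv_form[of 4 \<Phi>]]
    by simp
  moreover have "hpoly_fun 4 (\<lambda>z :: 'a^'n. 3 * dot (deriv_form 2 \<Phi> z) (deriv_form 2 \<Phi> z))"
    using hpoly_fun_scale[OF
        hpoly_fun_dot[OF hpoly_map_deriv_form[of 2 \<Phi>] hpoly_map_deriv_form[of 2 \<Phi>]]]
    by simp
  moreover have "hpoly_fun 4 (\<lambda>z :: 'a^'n. 4 * dot z (deriv_form 3 \<Phi> z))"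
    using hpoly_fun_scale[OF hpoly_fun_dot[OF hpoly_map_id hpoly_map_deriv_form[of 3 \<Phi>]]] by simp
  ultimately show ?thesis
    unfolding deriv_circle_form4_def circle_form4_def
    using hpoly_map_scale[OF hpoly_fun_add hpoly_map_deriv_form, of 4 _ _ 2 \<Phi>]
    by (intro hpoly_map_diff) simp_all
qed

lemma deriv_circle_forms_proportional_real:
  fixes \<Phi> :: "real^'n \<Rightarrow> real^'n" and x :: "real^'n"
  assumes "zariski_dense_lines \<L>" "smooth_diffeo_germ_id \<Phi> U"
    and "\<forall>L\<in>\<L>. \<exists>\<epsilon>>0. L \<inter> ball 0 \<epsilon> \<subseteq> U \<and> (\<exists>S. is_circle S \<and> \<Phi> ` (L \<inter> ball 0 \<epsilon>) \<subseteq> S)"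
  shows "proportional x (deriv_circle_form3 \<Phi> x) \<and> proportional x (deriv_circle_form4 \<Phi> x)"
proof -
  have on_lines: "proportional x (deriv_circle_form3 \<Phi> x) \<and> proportional x (deriv_circle_form4 \<Phi> x)"
    if "L \<in> \<L>" "x \<in> L" for L x
  proof -
    have "line_through_0 L"
      using assms(1) that(1) unfolding zariski_dense_lines_def by blast
    with assms(2,3) that show ?thesis
      using deriv_circle_forms_proportional_on_line by metis
  qed
  show ?thesis
  proof
    show "proportional x (deriv_circle_form3 \<Phi> x)"
      by (rule zariski_dense_lines_proportional[OF assms(1) hpoly_map_deriv_circle_form3])
        (use on_lines in blast)
    show "proportional x (deriv_circle_form4 \<Phi> x)"
      by (rule zariski_dense_lines_proportional[OF assms(1) hpoly_map_deriv_circle_form4])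
        (use on_lines in blast)
  qed
qed

definition of_real_vec :: "real^'n \<Rightarrow> complex^'n" where
  "of_real_vec x = (\<chi> i. complex_of_real (x $ i))"

lemma of_real_prod_list_coordinates: "(\<Prod>i\<leftarrow>is. of_real (x $ i)) = of_real (\<Prod>i\<leftarrow>is. x $ i)"
  by (induction "is") simp_all

lemma of_real_vec_deriv_form: "deriv_form m F (of_real_vec x) = of_real_vec (deriv_form m F x)"
  by (simp add: deriv_form_def of_real_vec_def vec_eq_iff of_real_prod_list_coordinates)

lemma dot_of_real_vec: "dot (of_real_vec x) (of_real_vec y) = of_real (dot x y)"
  by (simp add: dot_def of_real_vec_def)

lemma of_real_vec_deriv_circle_form3:
  "deriv_circle_form3 \<Phi> (of_real_vec x) = of_real_vec (deriv_circle_form3 \<Phi> x)"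
  unfolding deriv_circle_form3_def circle_form3_def of_real_vec_deriv_form dot_of_real_vec
  by (simp add: of_real_vec_def vec_eq_iff)

lemma of_real_vec_deriv_circle_form4:
  "deriv_circle_form4 \<Phi> (of_real_vec x) = of_real_vec (deriv_circle_form4 \<Phi> x)"
  unfolding deriv_circle_form4_def circle_form4_def of_real_vec_deriv_form dot_of_real_vec
  by (simp add: of_real_vec_def vec_eq_iff)

definition poly_along_lines :: "('a::comm_ring_1^'n \<Rightarrow> 'a) \<Rightarrow> bool" where
  "poly_along_lines F \<longleftrightarrow> (\<forall>z w. \<exists>p. \<forall>s. F (z + s *s w) = poly p s)"

lemma poly_along_lines_const: "poly_along_lines (\<lambda>z. c)"
  unfolding poly_along_lines_def by (intro allI exI[of _ "[:c:]"]) simp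

lemma poly_along_lines_coordinate: "poly_along_lines (\<lambda>z. z $ i)"
  unfolding poly_along_lines_def by (intro allI exI[of _ "[:_ $ i, _ $ i:]"]) (simp add: ac_simps)

lemma poly_along_lines_add:
  "poly_along_lines F \<Longrightarrow> poly_along_lines G \<Longrightarrow> poly_along_lines (\<lambda>z. F z + G z)"
  unfolding poly_along_lines_def by (metis poly_add)

lemma poly_along_lines_uminus: "poly_along_lines F \<Longrightarrow> poly_along_lines (\<lambda>z. - F z)"
  unfolding poly_along_lines_def by (metis poly_minus)

lemma poly_along_lines_diff:
  "poly_along_lines F \<Longrightarrow> poly_along_lines G \<Longrightarrow> poly_along_lines (\<lambda>z. F z - G z)"
  unfolding poly_along_lines_def by (metis poly_diff)

lemma poly_along_lines_mult:
  "poly_along_lines F \<Longrightarrow> poly_along_lines G \<Longrightarrow> poly_along_lines (\<lambda>z. F z * G z)"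
  unfolding poly_along_lines_def by (metis poly_mult)

lemma poly_along_lines_sum:
  "finite I \<Longrightarrow> (\<And>i. i \<in> I \<Longrightarrow> poly_along_lines (F i)) \<Longrightarrow> poly_along_lines (\<lambda>z. \<Sum>i\<in>I. F i z)"
  by (induction I rule: finite_induct) (simp_all add: poly_along_lines_const poly_along_lines_add)

lemma poly_along_lines_deriv_form: "poly_along_lines (\<lambda>z. deriv_form m F z $ k)"
proof -
  have prods: "poly_along_lines (\<lambda>z :: 'a^'n. \<Prod>i\<leftarrow>is. z $ i)" for "is"
    by (induction "is")
      (simp_all add: poly_along_lines_const poly_along_lines_mult poly_along_lines_coordinate)
  show ?thesis
    unfolding deriv_form_def vec_lambda_beta
    by (intro poly_along_lines_sum poly_along_lines_mult poly_along_lines_const prods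
        finite_lists_length)
qed

lemma poly_along_lines_dot:
  "(\<And>i. poly_along_lines (\<lambda>z. F z $ i)) \<Longrightarrow> (\<And>i. poly_along_lines (\<lambda>z. G z $ i))
    \<Longrightarrow> poly_along_lines (\<lambda>z. dot (F z) (G z))"
  unfolding dot_def by (intro poly_along_lines_sum poly_along_lines_mult) auto

lemmas poly_along_lines_intros = poly_along_lines_const poly_along_lines_coordinate poly_along_lines_add
  poly_along_lines_uminus poly_along_lines_diff poly_along_lines_mult poly_along_lines_sum
  poly_along_lines_dot poly_along_lines_deriv_form

lemma poly_along_lines_deriv_circle_form3: "poly_along_lines (\<lambda>z. deriv_circle_form3 \<Phi> z $ k)"
  unfolding deriv_circle_form3_def circle_form3_def by (simp add: poly_along_lines_intros)

lemma poly_along_lines_deriv_circle_form4: "poly_along_lines (\<lambda>z. deriv_circle_form4 \<Phi> z $ k)"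
  unfolding deriv_circle_form4_def circle_form4_def by (simp add: poly_along_lines_intros)

lemma poly_eq_0_if_infinite_roots:
  fixes p :: "'a::idom poly"
  assumes "infinite S" "\<And>s. s \<in> S \<Longrightarrow> poly p s = 0"
  shows "p = 0"
  using assms poly_roots_finite[of p] finite_subset[of S "{s. poly p s = 0}"] by blast

lemma poly_along_lines_vanishing_on_reals:
  fixes F :: "complex^'n \<Rightarrow> complex"
  assumes "poly_along_lines F" "\<And>x. F (of_real_vec x) = 0"
  shows "F z = 0"
proof -
  define x y where "x = (\<chi> i. Re (z $ i))" "y = (\<chi> i. Im (z $ i))"
  obtain p where p: "\<And>s. F (of_real_vec x + s *s of_real_vec y) = poly p s"
    using assms(1) unfolding poly_along_lines_def by blast
  have "of_real_vec x + complex_of_real t *s of_real_vec y = of_real_vec (x + t *\<^sub>R y)" for t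
    by (simp add: of_real_vec_def vec_eq_iff)
  then have "poly p s = 0" if "s \<in> range complex_of_real" for s
    using that p[symmetric] assms(2) by auto
  moreover have "infinite (range complex_of_real)"
    using infinite_UNIV_char_0 finite_imageD[of complex_of_real UNIV] inj_of_real by blast
  ultimately have "p = 0"
    using poly_eq_0_if_infinite_roots by blast
  moreover have "z = of_real_vec x + \<i> *s of_real_vec y"
    by (simp add: of_real_vec_def x_y_def vec_eq_iff complex_eq_iff)
  ultimately show ?thesis
    using p by simp
qed

lemma proportional_of_real_vec: "proportional (of_real_vec x) (of_real_vec y) \<longleftrightarrow> proportional x y"
  unfolding proportional_def of_real_vec_def by (simp flip: of_real_mult)

lemma proportional_if_proportional_on_reals:
  fixes X :: "complex^'n \<Rightarrow> complex^'n"
  assumes "\<And>k. poly_along_lines (\<lambda>z. X z $ k)" "\<And>x. X (of_real_vec x) = of_real_vec (Y x)"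
    and "\<And>x. proportional x (Y x)"
  shows "proportional z (X z)"
proof -
  have "z $ k * X z $ l - z $ l * X z $ k = 0" for k l
  proof -
    have "poly_along_lines (\<lambda>z. z $ k * X z $ l - z $ l * X z $ k)"
      by (intro poly_along_lines_diff poly_along_lines_mult poly_along_lines_coordinate assms(1))
    moreover have "of_real_vec x $ k * X (of_real_vec x) $ l - of_real_vec x $ l * X (of_real_vec x) $ k = 0"
      for x
      using assms(3)[of x] unfolding assms(2) proportional_of_real_vec[symmetric] proportional_def
      by simp
    ultimately show ?thesis
      by (rule poly_along_lines_vanishing_on_reals)
  qed
  then show ?thesis
    unfolding proportional_def by simp
qed

lemma deriv_circle_forms_proportional_complex:
  fixes \<Phi> :: "real^'n \<Rightarrow> real^'n" and z :: "complex^'n"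
  assumes "zariski_dense_lines \<L>" "smooth_diffeo_germ_id \<Phi> U"
    and "\<forall>L\<in>\<L>. \<exists>\<epsilon>>0. L \<inter> ball 0 \<epsilon> \<subseteq> U \<and> (\<exists>S. is_circle S \<and> \<Phi> ` (L \<inter> ball 0 \<epsilon>) \<subseteq> S)"
  shows "proportional z (deriv_circle_form3 \<Phi> z) \<and> proportional z (deriv_circle_form4 \<Phi> z)"
  using deriv_circle_forms_proportional_real[OF assms]
  by (intro conjI
      proportional_if_proportional_on_reals[OF poly_along_lines_deriv_circle_form3
        of_real_vec_deriv_circle_form3]
      proportional_if_proportional_on_reals[OF poly_along_lines_deriv_circle_form4
        of_real_vec_deriv_circle_form4])
    blast+

lemma dot_conj_self_nonzero:
  fixes v :: "complex^'n"
  assumes "v \<noteq> 0"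
  shows "dot v (\<chi> i. cnj (v $ i)) \<noteq> 0"
proof -
  obtain m where "v $ m \<noteq> 0"
    using assms by (auto simp: vec_eq_iff)
  have "dot v (\<chi> i. cnj (v $ i)) = (\<Sum>i\<in>UNIV. complex_of_real ((cmod (v $ i))\<^sup>2))"
    unfolding dot_def vec_lambda_beta complex_norm_square ..
  also have "\<dots> = of_real (\<Sum>i\<in>UNIV. (cmod (v $ i))\<^sup>2)"
    by (rule of_real_sum[symmetric])
  moreover have "(\<Sum>i\<in>UNIV. (cmod (v $ i))\<^sup>2) > 0"
    using \<open>v $ m \<noteq> 0\<close> by (intro sum_pos2[of _ m]) auto
  ultimately show ?thesis
    by (metis of_real_eq_0_iff less_irrefl)
qed

text \<open>Along the line \<open>v + s w\<close> with \<open>w = conj v\<close> the form \<open>z \<cdot> z\<close> equals \<open>s (2 v \<cdot> w + s w \<cdot> w)\<close> with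
  \<open>v \<cdot> w = |v|\<^sup>2 \<noteq> 0\<close>, and \<open>f\<close> vanishes at \<open>s = 0\<close> as well; dividing the identity by \<open>s\<close>, everything
  being polynomial in \<open>s\<close>, and then setting \<open>s = 0\<close> gives \<open>2 |v|\<^sup>2 F v = (f/s)(0) G v = 0\<close>.\<close>

lemma cone_division_vanishing:
  fixes f F G :: "complex^'n \<Rightarrow> complex"
  assumes "poly_along_lines f" "poly_along_lines F" "poly_along_lines G"
    and f: "\<And>z. dot z z = 0 \<Longrightarrow> f z = 0" and division: "\<And>z. dot z z * F z = f z * G z"
    and "dot v v = 0" "v \<noteq> 0" "G v = 0"
  shows "F v = 0"
proof -
  define w where "w = (\<chi> i. cnj (v $ i))"
  have "dot v w \<noteq> 0"
    unfolding w_def using dot_conj_self_nonzero[OF \<open>v \<noteq> 0\<close>] .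
  have cone_line: "dot (v + s *s w) (v + s *s w) = s * (2 * dot v w + s * dot w w)" for s
    using \<open>dot v v = 0\<close>
    by (simp add: dot_def algebra_simps sum.distrib sum_distrib_left power2_eq_square)
  obtain pf pF pG where pf: "\<And>s. f (v + s *s w) = poly pf s"
    and pF: "\<And>s. F (v + s *s w) = poly pF s" and pG: "\<And>s. G (v + s *s w) = poly pG s"
    using assms(1-3) unfolding poly_along_lines_def by metis
  obtain a q where "pf = pCons a q"
    by (cases pf)
  moreover have "poly pf 0 = 0"
    using pf[of 0] f \<open>dot v v = 0\<close> by simp
  ultimately have fq: "f (v + s *s w) = s * poly q s" for s
    using pf by simp
  define r where "r = [:2 * dot v w, dot w w:] * pF - q * pG"
  have "poly r s = 0" if "s \<noteq> 0" for s
  proof -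
    have "s * poly r s = 0"
      using division[of "v + s *s w"] unfolding cone_line fq pF pG r_def
      by (simp add: algebra_simps)
    then show ?thesis
      using that by simp
  qed
  then have "r = 0"
    by (intro poly_eq_0_if_infinite_roots[of "- {0}"]) (simp_all add: infinite_UNIV_char_0)
  then have "poly r 0 = 0"
    by simp
  then have "2 * dot v w * F v = poly q 0 * G v"
    using pF[of 0] pG[of 0] unfolding r_def by simp
  then show ?thesis
    using \<open>dot v w \<noteq> 0\<close> \<open>G v = 0\<close> by simp
qed

lemma proportional_circle_form3_identity:
  assumes "proportional y (circle_form3 y a b)"
  shows "dot y y * (dot y y * b $ i - 3 * dot y a * a $ i)
    = (dot y y * dot y b - 3 * dot y a * dot y a) * y $ i"
  using proportional_dot[OF assms, of i]
  by (simp add: circle_form3_def dot_diff_left dot_scale_left dot_commute[of a y] dot_commute[of b y])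

lemma isotropic_circle_form3_orthogonal:
  fixes y a b :: "'a::field_char_0^'n"
  assumes "proportional y (circle_form3 y a b)" "dot y y = 0"
  shows "dot y a = 0"
proof (cases "y = 0")
  case True
  then show ?thesis
    by (simp add: dot_def)
next
  case False
  then obtain i where "y $ i \<noteq> 0"
    by (auto simp: vec_eq_iff)
  with proportional_circle_form3_identity[OF assms(1), of i] assms(2) show ?thesis
    by simp
qed

lemma deriv_form3_orthogonal_on_cone:
  fixes \<Phi> :: "real^'n \<Rightarrow> real^'n" and z :: "complex^'n"
  assumes X: "\<And>y :: complex^'n. proportional y (deriv_circle_form3 \<Phi> y)" and cone: "dot z z = 0"
  shows "dot z (deriv_form 3 \<Phi> z) = 0"
proof (cases "z = 0")
  case True
  then show ?thesis
    by (simp add: dot_def)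
next
  case False
  then obtain m where "z $ m \<noteq> 0"
    by (auto simp: vec_eq_iff)
  define A B where "A = (deriv_form 2 \<Phi> :: complex^'n \<Rightarrow> complex^'n)"
    and "B = (deriv_form 3 \<Phi> :: complex^'n \<Rightarrow> complex^'n)"
  have X': "proportional y (circle_form3 y (A y) (B y))" for y
    using X[of y] by (simp add: deriv_circle_form3_def A_def B_def)
  have f_cone: "dot y (A y) = 0" if "dot y y = 0" for y
    using isotropic_circle_form3_orthogonal[OF X' that] .
  have "dot z z * B z $ m - 3 * dot z (A z) * A z $ m - dot z (B z) * z $ m = 0"
  proof (rule cone_division_vanishing[where f = "\<lambda>y. dot y (A y)"
        and F = "\<lambda>y. dot y y * B y $ m - 3 * dot y (A y) * A y $ m - dot y (B y) * y $ m"
        and G = "\<lambda>y. - 3 * dot y (A y) * y $ m"])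
    show "dot y y * (dot y y * B y $ m - 3 * dot y (A y) * A y $ m - dot y (B y) * y $ m)
        = dot y (A y) * (- 3 * dot y (A y) * y $ m)" for y
      using proportional_circle_form3_identity[OF X'[of y], of m] by (simp add: algebra_simps)
  qed (use f_cone cone False in \<open>auto simp: A_def B_def intro!: poly_along_lines_intros\<close>)
  then show ?thesis
    using cone f_cone[OF cone] \<open>z $ m \<noteq> 0\<close> by (simp add: B_def)
qed

lemma deriv_form2_isotropic_on_cone:
  fixes \<Phi> :: "real^'n \<Rightarrow> real^'n" and z :: "complex^'n"
  assumes X: "\<And>y :: complex^'n. proportional y (deriv_circle_form3 \<Phi> y)"
    and Y: "\<And>y :: complex^'n. proportional y (deriv_circle_form4 \<Phi> y)"
    and cone: "dot z z = 0"
  shows "dot (deriv_form 2 \<Phi> z) (deriv_form 2 \<Phi> z) = 0"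
proof (cases "z = 0")
  case True
  then show ?thesis
    by (simp add: deriv_form_at_0 dot_def)
next
  case False
  define A Yf where "A = (deriv_form 2 \<Phi> :: complex^'n \<Rightarrow> complex^'n)"
    and "Yf = (deriv_circle_form4 \<Phi> :: complex^'n \<Rightarrow> complex^'n)"
  have f_cone: "dot y (A y) = 0" if "dot y y = 0" for y
    using isotropic_circle_form3_orthogonal[OF X[of y, unfolded deriv_circle_form3_def] that]
    by (simp add: A_def)
  have Yf_eq:
    "Yf y = dot y y *s deriv_form 4 \<Phi> y - (3 * dot (A y) (A y) + 4 * dot y (deriv_form 3 \<Phi> y)) *s A y"
    for y
    by (simp add: Yf_def deriv_circle_form4_def circle_form4_def A_def)
  have "dot (Yf z) (A z) = 0"
  proof (rule cone_division_vanishing[where f = "\<lambda>y. dot y (A y)" and F = "\<lambda>y. dot (Yf y) (A y)"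
        and G = "\<lambda>y. dot (Yf y) y"])
    show "dot y y * dot (Yf y) (A y) = dot y (A y) * dot (Yf y) y" for y
    proof -
      have "dot y y * dot (Yf y) (A y) = (\<Sum>i\<in>UNIV. (dot y y * Yf y $ i) * A y $ i)"
        by (simp add: dot_def sum_distrib_left ac_simps)
      also have "\<dots> = (\<Sum>i\<in>UNIV. (dot (Yf y) y * y $ i) * A y $ i)"
        using proportional_dot[OF Y[of y]] by (simp add: Yf_def)
      also have "\<dots> = dot (Yf y) y * dot y (A y)"
        by (simp add: dot_def sum_distrib_left mult.assoc)
      finally show ?thesis
        by (simp add: mult.commute)
    qed
    show "dot (Yf z) z = 0"
      using cone f_cone[OF cone] deriv_form3_orthogonal_on_cone[OF X cone]
      by (simp add: Yf_eq dot_minus_left dot_scale_left dot_commute[of "A z" z])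
  qed (use f_cone cone False in \<open>auto simp: A_def Yf_def intro!: poly_along_lines_intros
      poly_along_lines_deriv_circle_form4\<close>)
  then have "dot (A z) (A z) * dot (A z) (A z) = 0"
    using cone deriv_form3_orthogonal_on_cone[OF X cone]
    by (simp add: Yf_eq dot_minus_left dot_scale_left)
  then show ?thesis
    by (simp add: A_def)
qed

lemma cbil_eq_dot: "cbil = dot"
  unfolding cbil_def[abs_def] dot_def[abs_def] ..

theorem proposition1:
  fixes \<L> :: "(real^'n) set set" and \<Phi> :: "real^'n \<Rightarrow> real^'n" and U :: "(real^'n) set"
  assumes "zariski_dense_lines \<L>"
    and "smooth_diffeo_germ_id \<Phi> U"
    and "\<forall>L\<in>\<L>. \<exists>\<epsilon>>0. L \<inter> ball 0 \<epsilon> \<subseteq> U \<and> (\<exists>S. is_circle S \<and> \<Phi> ` (L \<inter> ball 0 \<epsilon>) \<subseteq> S)"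
  shows "\<forall>z::complex^'n. cbil z z = 0 \<longrightarrow>
           cbil (quad_part_C \<Phi> z) (quad_part_C \<Phi> z) = 0 \<and> cbil (quad_part_C \<Phi> z) z = 0"
proof (intro allI impI)
  fix z :: "complex^'n"
  assume "cbil z z = 0"
  then have cone: "dot z z = 0"
    by (simp add: cbil_eq_dot)
  note proportional = deriv_circle_forms_proportional_complex[OF assms]
  have "dot (deriv_form 2 \<Phi> z) (deriv_form 2 \<Phi> z) = 0"
    using proportional by (intro deriv_form2_isotropic_on_cone[OF _ _ cone]) blast+
  moreover have "dot z (deriv_form 2 \<Phi> z) = 0"
    using proportional isotropic_circle_form3_orthogonal[OF _ cone]
    unfolding deriv_circle_form3_def by blast
  ultimately show "cbil (quad_part_C \<Phi> z) (quad_part_C \<Phi> z) = 0 \<and> cbil (quad_part_C \<Phi> z) z = 0"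
    by (simp add: quad_part_C_deriv_form cbil_eq_dot dot_scale_left dot_scale_right
        dot_commute[of "deriv_form 2 \<Phi> z" z])
qed

end
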